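(* Let $N\ge 2$, $n\ge1$. For $i=1,\dots,N$ let $f_i:\mathbb{R}^n\to\mathbb{R}$ be twice continuously differentiable with $\mu I_n\preceq\nabla^2 f_i(x)\preceq L I_n$ for all $x$ ($0<\mu\le L$), and with Lipschitz Hessians: $\|\nabla^2 f_i(x)-\nabla^2 f_i(y)\|\le \bar L\|x-y\|$ for all $x,y$ and all $i$. Let $f=\frac1N\sum_i f_i$ with unique minimizer $x^\star$. For $\mathbf{x}\in\mathbb{R}^{N\times n}$ with rows $x_1,\dots,x_N$ define $H_{tr}(\mathbf{x})=\frac1N\sum_{i=1}^N\nabla^2 f_i(x_i)$ and $H_{app}(\mathbf{x})=\big(\frac1N\sum_{i=1}^N(\nabla^2 f_i(x_i))^{-1}\big)^{-1}$, and assume there is $\gamma$ with $\|H_{tr}(\mathbf{x})-H_{app}(\mathbf{x})\|\le\gamma$ for all $\mathbf{x}\in\mathbb{R}^{N\times n}$. Let $W\in\mathbb{R}^{N\times N}$ be a symmetric doubly stochastic consensus matrix of a connected undirected graph with $\sigma=\|W-\frac1N\mathbf{1}\mathbf{1}^T\|_2<1$. Consider the Network-GIANT iteration $$\mathbf{x}_{k+1}=W\mathbf{x}_k-\eta\,\mathbf{y}_k,\qquad \mathbf{s}_{k+1}=W\mathbf{s}_k+\nabla_{k+1}-\nabla_k,\qquad \mathbf{s}_0=\nabla_0,$$ where $\nabla_k\in\mathbb{R}^{N\times n}$ has $i$-th row $\nabla f_i(x_i^k)$ ($x_i^k$ the $i$-th row of $\mathbf{x}_k$, gradients as row vectors) and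 $\mathbf{y}_k$ has $i$-th row $s_i^k(\nabla^2 f_i(x_i^k))^{-1}$ ($s_i^k$ the $i$-th row of $\mathbf{s}_k$). Let $\bar x_k=\frac1N\mathbf{1}^T\mathbf{x}_k$ and $g_k=\frac1N\mathbf{1}^T\nabla_k$. If $\gamma<\mu$ and $0<\eta<1$, then for every $k\ge0$, $$\|\bar x_{k+1}-x^\star\|\le\Big(1-\eta\big(1-\tfrac{\gamma}{\mu}\big)\Big)\|\bar x_k-x^\star\|+\frac{\eta\bar L}{\mu\sqrt N}\|\mathbf{x}_k-\mathbf{1}\bar x_k\|\,\|\bar x_k-x^\star\|+\frac{\eta\bar L}{2\mu}\|\bar x_k-x^\star\|^2+\frac{\eta}{\mu\sqrt N}\|\mathbf{s}_k-\mathbf{1}g_k\|+\frac{\eta L}{\mu\sqrt N}\|\mathbf{x}_k-\mathbf{1}\bar x_k\|.$$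
   Context: Vector norms $\|\cdot\|$ are Euclidean 2-norms; for matrices $\|\cdot\|$ denotes the Frobenius norm and $\|\cdot\|_2$ the spectral norm. $\mathbf{1}\in\mathbb{R}^N$ is the all-ones column vector. Points of $\mathbb{R}^n$ are treated as row vectors where convenient. *)

theory Defs
  imports "HOL-Analysis.Analysis"
begin

definition loewner_le :: "real^'n^'n \<Rightarrow> real^'n^'n \<Rightarrow> bool" where
  "loewner_le A B \<longleftrightarrow> (\<forall>v. v \<bullet> ((B - A) *v v) \<ge> 0)"

definition spec_norm :: "real^'m^'m \<Rightarrow> real" where
  "spec_norm A = onorm (\<lambda>v. A *v v)"

definition avg_mat :: "real^'m^'m" where
  "avg_mat = (\<chi> i j. 1 / real CARD('m))"

definition row_avg :: "real^'n^'m \<Rightarrow> real^'n" where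
  "row_avg X = (1 / real CARD('m)) *\<^sub>R (\<Sum>i\<in>UNIV. X $ i)"

definition ones_row :: "real^'n \<Rightarrow> real^'n^'m" where
  "ones_row v = (\<chi> i. v)"

definition doubly_stochastic :: "real^'m^'m \<Rightarrow> bool" where
  "doubly_stochastic W \<longleftrightarrow> (\<forall>i j. W $ i $ j \<ge> 0) \<and>
     (\<forall>i. (\<Sum>j\<in>UNIV. W $ i $ j) = 1) \<and> (\<forall>j. (\<Sum>i\<in>UNIV. W $ i $ j) = 1)"

definition consensus_matrix_of :: "('m \<Rightarrow> 'm \<Rightarrow> bool) \<Rightarrow> real^'m^'m \<Rightarrow> bool" where
  "consensus_matrix_of E W \<longleftrightarrow> (\<forall>i j. E i j \<longleftrightarrow> E j i) \<and> (\<forall>i. \<not> E i i) \<and>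
     (\<forall>i j. E\<^sup>*\<^sup>* i j) \<and> (\<forall>i j. i \<noteq> j \<longrightarrow> W $ i $ j \<noteq> 0 \<longrightarrow> E i j)"

end

theory Submission
  imports Defs
begin

(*
  Averaging the iteration with the doubly stochastic W gives xbar_(k+1) = xbar_k - eta y with
  y = (1/N) sum_i s_i H_i^-1, where H_i is the Hessian of f_i at x_i. With d = xbar_k - xstar,
  g the average gradient and A = (1/N) sum_i H_i^-1 (so that H_app = A^-1), the error y - d splits
  into the tracking error (1/N) sum_i (s_i - g) H_i^-1, the Hessian approximation error
  d (H_tr - H_app) A, and (g - H_tr d) A. All of H_i^-1 and A have norm at most 1/mu, and
  g - H_tr d is controlled by the L-Lipschitz gradients (consensus error of the x_i) together
  with the Taylor remainder of the Lipschitz Hessians around xbar_k, using that the gradients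
  sum to zero at xstar. The Hessians are symmetric, being Lipschitz second derivatives; this gives
  the bound L on their norm and lets row vectors and column vectors be exchanged.
*)

section \<open>Norms of matrix products\<close>

lemma norm_matrix_vector_mult_le:
  fixes A :: "real^'n^'m"
  shows "norm (A *v x) \<le> norm A * norm x"
proof -
  have "norm (A *v x) = L2_set (\<lambda>i. \<bar>A $ i \<bullet> x\<bar>) UNIV"
    by (simp add: norm_vec_def matrix_mult_dot)
  also have "\<dots> \<le> L2_set (\<lambda>i. norm (A $ i) * norm x) UNIV"
    by (rule L2_set_mono) (auto simp: Cauchy_Schwarz_ineq2)
  also have "\<dots> = norm A * norm x"
    by (simp add: norm_vec_def L2_set_left_distrib)
  finally show ?thesis .
qed

lemma vector_matrix_mult_eq_sum_rows:
  fixes A :: "real^'n^'m"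
  shows "x v* A = (\<Sum>i\<in>UNIV. x $ i *\<^sub>R A $ i)"
  by (simp add: vec_eq_iff vector_matrix_mult_def sum_component mult.commute)

lemma norm_vector_matrix_mult_le:
  fixes A :: "real^'n^'m"
  shows "norm (x v* A) \<le> norm x * norm A"
proof -
  have "norm (x v* A) \<le> (\<Sum>i\<in>UNIV. norm (x $ i *\<^sub>R A $ i))"
    unfolding vector_matrix_mult_eq_sum_rows by (rule norm_sum)
  also have "\<dots> = (\<Sum>i\<in>UNIV. \<bar>x $ i\<bar> * norm (A $ i))"
    by simp
  also have "\<dots> \<le> L2_set (\<lambda>i. x $ i) UNIV * L2_set (\<lambda>i. norm (A $ i)) UNIV"
    using L2_set_mult_ineq[of "\<lambda>i. x $ i" "\<lambda>i. norm (A $ i)" UNIV] by simp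
  also have "\<dots> = norm x * norm A"
    by (simp add: norm_vec_def L2_set_def)
  finally show ?thesis .
qed

lemma average_norm_rows_le:
  fixes X :: "real^'n^'m"
  shows "(\<Sum>i\<in>UNIV. norm (X $ i)) / real CARD('m) \<le> norm X / sqrt (real CARD('m))"
proof -
  have "(\<Sum>i\<in>UNIV. norm (X $ i)) \<le> L2_set (\<lambda>i. norm (X $ i)) UNIV * L2_set (\<lambda>i::'m. 1) UNIV"
    using L2_set_mult_ineq[of "\<lambda>i. norm (X $ i)" "\<lambda>i. 1::real" UNIV] by simp
  also have "\<dots> = norm X * sqrt (real CARD('m))"
    by (simp add: norm_vec_def L2_set_constant)
  finally have "(\<Sum>i\<in>UNIV. norm (X $ i)) / real CARD('m) \<le> norm X * sqrt (real CARD('m)) / real CARD('m)"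
    by (rule divide_right_mono) simp
  also have "\<dots> = norm X / sqrt (real CARD('m))"
    by (simp only: divide_divide_eq_right[symmetric] real_div_sqrt of_nat_0_le_iff)
  finally show ?thesis .
qed

lemma norm_average_le:
  fixes F :: "'m::finite \<Rightarrow> 'a::real_normed_vector"
  shows "norm ((1 / real CARD('m)) *\<^sub>R (\<Sum>i\<in>UNIV. F i)) \<le> (\<Sum>i\<in>UNIV. norm (F i)) / real CARD('m)"
  using norm_sum[of F UNIV] by (simp add: divide_right_mono)

lemma vector_matrix_mult_sum:
  fixes A :: "'i \<Rightarrow> real^'n^'m"
  shows "x v* (\<Sum>i\<in>S. A i) = (\<Sum>i\<in>S. x v* A i)"
  by (induction S rule: infinite_finite_induct) (auto simp: algebra_simps)

lemma matrix_vector_mult_sum: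
  fixes A :: "'i \<Rightarrow> real^'n^'m"
  shows "(\<Sum>i\<in>S. A i) *v x = (\<Sum>i\<in>S. A i *v x)"
  by (induction S rule: infinite_finite_induct) (auto simp: matrix_vector_mult_add_rdistrib)

lemma scaleR_matrix_vector_mult:
  fixes A :: "real^'n^'m"
  shows "(c *\<^sub>R A) *v x = c *\<^sub>R (A *v x)"
  by (simp add: vec_eq_iff matrix_vector_mult_def sum_distrib_left mult.assoc)

section \<open>Symmetric and positive definite matrices\<close>

lemma quadratic_form_lower_bound:
  assumes "loewner_le (\<mu> *\<^sub>R mat 1) M"
  shows "\<mu> * (v \<bullet> v) \<le> v \<bullet> (M *v v)"
  using assms unfolding loewner_le_def
  by (auto simp: algebra_simps scaleR_matrix_vector_mult inner_diff_right)

lemma quadratic_form_upper_bound: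
  assumes "loewner_le M (L *\<^sub>R mat 1)"
  shows "v \<bullet> (M *v v) \<le> L * (v \<bullet> v)"
  using assms unfolding loewner_le_def
  by (auto simp: algebra_simps scaleR_matrix_vector_mult inner_diff_right)

lemma transpose_diff:
  fixes A B :: "'a::ab_group_add^'n^'m"
  shows "transpose (A - B) = transpose A - transpose B"
  by (simp add: transpose_def vec_eq_iff)

lemma inner_matrix_vector_mult_symmetric:
  fixes S :: "real^'n^'n"
  assumes "transpose S = S"
  shows "x \<bullet> (S *v y) = y \<bullet> (S *v x)"
  using dot_lmul_matrix[of x S y] transpose_matrix_vector[of S x] assms
  by (simp add: inner_commute)

lemma symmetric_matrixI:
  fixes M :: "real^'n^'n"
  assumes "\<And>u v. v \<bullet> (M *v u) = u \<bullet> (M *v v)"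
  shows "transpose M = M"
proof -
  have "(transpose M *v u - M *v u) \<bullet> v = 0" for u v
    using assms[of u v] dot_lmul_matrix[of u M v]
    by (simp add: inner_diff_left inner_diff_right inner_commute)
  then have "transpose M *v u = M *v u" for u
    by (metis inner_eq_zero_iff right_minus_eq)
  then show ?thesis
    by (simp add: matrix_eq)
qed

lemma symmetric_matrix_norm_le:
  fixes S :: "real^'n^'n"
  assumes sym: "transpose S = S"
    and quad: "\<And>z. \<bar>z \<bullet> (S *v z)\<bar> \<le> c * (z \<bullet> z)"
  shows "norm (S *v v) \<le> c * norm v"
proof -
  have polar: "4 * (x \<bullet> (S *v y)) \<le> 2 * c * (x \<bullet> x + y \<bullet> y)" for x y
  proof -
    have "4 * (x \<bullet> (S *v y)) = (x + y) \<bullet> (S *v (x + y)) - (x - y) \<bullet> (S *v (x - y))"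
      using inner_matrix_vector_mult_symmetric[OF sym, of x y]
      by (simp add: inner_add_left inner_add_right inner_diff_left inner_diff_right
          matrix_vector_right_distrib matrix_vector_mult_diff_distrib)
    also have "\<dots> \<le> c * ((x + y) \<bullet> (x + y)) + c * ((x - y) \<bullet> (x - y))"
      using quad[of "x + y"] quad[of "x - y"] by (simp add: abs_le_iff)
    also have "\<dots> = 2 * c * (x \<bullet> x + y \<bullet> y)"
      by (simp add: inner_add_left inner_add_right inner_diff_left inner_diff_right
          algebra_simps inner_commute)
    finally show ?thesis .
  qed
  define a where "a = norm (S *v v)"
  define b where "b = norm v"
  have "0 \<le> c * (norm v)\<^sup>2"
    using order_trans[OF abs_ge_zero quad[of v]] by (simp add: power2_norm_eq_inner)
  then have cb: "0 \<le> c * b"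
    by (cases "b = 0") (auto simp: b_def zero_le_mult_iff)
  show ?thesis
  proof (cases "a = 0 \<or> b = 0")
    case True
    with cb show ?thesis
      by (auto simp: a_def b_def)
  next
    case False
    then have a: "a > 0" and b: "b > 0" by (auto simp: a_def b_def)
    have "4 * (b * a * (a * a)) \<le> 2 * c * (b * b * (a * a) + a * a * (b * b))"
      using polar[of "b *\<^sub>R (S *v v)" "a *\<^sub>R v"]
      by (simp add: a_def b_def matrix_vector_mult_scaleR algebra_simps
          flip: power2_norm_eq_inner power2_eq_square)
    then have "(a * a * b) * a \<le> (a * a * b) * (c * b)"
      by (simp add: algebra_simps)
    then show ?thesis
      using a b by (simp add: a_def b_def mult_le_cancel_left)
  qed
qed

lemma psd_matrix_norm_le:
  fixes M :: "real^'n^'n"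
  assumes sym: "transpose M = M"
    and psd: "\<And>z. 0 \<le> z \<bullet> (M *v z)" and upper: "\<And>z. z \<bullet> (M *v z) \<le> L * (z \<bullet> z)"
  shows "norm (M *v v) \<le> L * norm v"
proof -
  define S where "S = M - (L / 2) *\<^sub>R mat 1"
  have S_apply: "S *v z = M *v z - (L / 2) *\<^sub>R z" for z
    by (simp add: S_def matrix_vector_mult_diff_rdistrib scaleR_matrix_vector_mult)
  have "\<bar>z \<bullet> (S *v z)\<bar> \<le> L / 2 * (z \<bullet> z)" for z
  proof -
    have "z \<bullet> (S *v z) = z \<bullet> (M *v z) - L / 2 * (z \<bullet> z)"
      by (simp add: S_apply inner_diff_right)
    then show ?thesis
      unfolding abs_le_iff using psd[of z] upper[of z] by linarith
  qed
  moreover have "transpose S = S"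
    using sym by (simp add: S_def transpose_diff transpose_scalar)
  ultimately have "norm (S *v v) \<le> L / 2 * norm v"
    by (intro symmetric_matrix_norm_le)
  moreover have "norm (M *v v) \<le> norm (S *v v) + norm ((L / 2) *\<^sub>R v)"
    using norm_triangle_ineq[of "S *v v" "(L / 2) *\<^sub>R v"] by (simp add: S_apply)
  moreover have "0 \<le> L"
  proof -
    obtain e :: "real^'n" where "e \<in> Basis" using nonempty_Basis by blast
    then show ?thesis
      using psd[of e] upper[of e] by simp
  qed
  ultimately show ?thesis
    by simp
qed

lemma matrix_mul_matrix_inv:
  fixes M :: "real^'n^'n"
  assumes "invertible M"
  shows "M ** matrix_inv M = mat 1" and "matrix_inv M ** M = mat 1"
proof -
  have "\<exists>A'. M ** A' = mat 1 \<and> A' ** M = mat 1"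
    using assms unfolding invertible_def .
  then have "M ** matrix_inv M = mat 1 \<and> matrix_inv M ** M = mat 1"
    unfolding matrix_inv_def by (rule someI_ex)
  then show "M ** matrix_inv M = mat 1" and "matrix_inv M ** M = mat 1"
    by auto
qed

lemma invertible_if_ker_trivial:
  fixes M :: "real^'n^'n"
  assumes "\<And>x. M *v x = 0 \<Longrightarrow> x = 0"
  shows "invertible M"
  unfolding invertible_left_inverse matrix_left_invertible_ker using assms by blast

lemma matrix_vector_mult_matrix_inv:
  fixes M :: "real^'n^'n"
  assumes "invertible M"
  shows "M *v (matrix_inv M *v v) = v"
  using matrix_mul_matrix_inv(1)[OF assms] by (simp add: matrix_vector_mul_assoc)

lemma positive_definite_invertible:
  fixes M :: "real^'n^'n"
  assumes lower: "\<And>z. \<mu> * (z \<bullet> z) \<le> z \<bullet> (M *v z)" and "0 < \<mu>"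
  shows "invertible M"
proof (rule invertible_if_ker_trivial)
  fix x assume "M *v x = 0"
  with lower[of x] \<open>0 < \<mu>\<close> show "x = 0"
    by (simp add: mult_le_0_iff flip: power2_norm_eq_inner)
qed

lemma positive_definite_inverse_quadratic_form:
  fixes M :: "real^'n^'n"
  assumes lower: "\<And>z. \<mu> * (z \<bullet> z) \<le> z \<bullet> (M *v z)" and "0 < \<mu>"
  shows "\<mu> * norm (matrix_inv M *v v) ^ 2 \<le> v \<bullet> (matrix_inv M *v v)"
proof -
  have "M *v (matrix_inv M *v v) = v"
    by (rule matrix_vector_mult_matrix_inv[OF positive_definite_invertible[OF assms]])
  then show ?thesis
    using lower[of "matrix_inv M *v v"] by (simp add: power2_norm_eq_inner inner_commute)
qed

lemma norm_vector_matrix_inv_le: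
  fixes M :: "real^'n^'n"
  assumes lower: "\<And>z. \<mu> * (z \<bullet> z) \<le> z \<bullet> (M *v z)" and "0 < \<mu>"
  shows "norm (w v* matrix_inv M) \<le> norm w / \<mu>"
proof -
  define z where "z = w v* matrix_inv M"
  have "z v* M = w"
    using matrix_mul_matrix_inv(2)[OF positive_definite_invertible[OF assms]]
    by (simp add: z_def vector_matrix_mul_assoc)
  then have "w \<bullet> z = z \<bullet> (M *v z)"
    using dot_lmul_matrix[of z M z] by simp
  then have "\<mu> * (norm z * norm z) \<le> w \<bullet> z"
    using lower[of z] by (simp flip: power2_norm_eq_inner power2_eq_square)
  also have "\<dots> \<le> norm w * norm z"
    by (rule norm_cauchy_schwarz)
  finally have "(\<mu> * norm z) * norm z \<le> norm w * norm z"
    by (simp add: mult_ac)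
  then have "\<mu> * norm z \<le> norm w"
    by (cases "norm z = 0") (use \<open>0 < \<mu>\<close> in \<open>auto simp: mult_le_cancel_right\<close>)
  then show ?thesis
    using \<open>0 < \<mu>\<close> by (simp add: z_def field_simps)
qed

lemma average_inverse_invertible:
  fixes M :: "'m::finite \<Rightarrow> real^'n^'n"
  assumes lower: "\<And>i z. \<mu> * (z \<bullet> z) \<le> z \<bullet> (M i *v z)" and "0 < \<mu>"
  shows "invertible ((1 / real CARD('m)) *\<^sub>R (\<Sum>i\<in>UNIV. matrix_inv (M i)))"
proof (rule invertible_if_ker_trivial)
  fix v
  assume "(1 / real CARD('m)) *\<^sub>R (\<Sum>i\<in>UNIV. matrix_inv (M i)) *v v = 0"
  then have "(\<Sum>i\<in>UNIV. v \<bullet> (matrix_inv (M i) *v v)) = 0"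
    by (simp add: scaleR_matrix_vector_mult matrix_vector_mult_sum flip: inner_sum_right)
  moreover have quad: "\<mu> * norm (matrix_inv (M i) *v v) ^ 2 \<le> v \<bullet> (matrix_inv (M i) *v v)" for i
    by (rule positive_definite_inverse_quadratic_form[OF lower \<open>0 < \<mu>\<close>])
  moreover have "0 \<le> v \<bullet> (matrix_inv (M i) *v v)" for i
    by (rule order_trans[OF _ quad]) (use \<open>0 < \<mu>\<close> in simp)
  ultimately have "v \<bullet> (matrix_inv (M i) *v v) = 0" for i
    by (simp add: sum_nonneg_eq_0_iff)
  then have inv_zero: "matrix_inv (M i) *v v = 0" for i
    using quad[of i] \<open>0 < \<mu>\<close> by (simp add: mult_le_0_iff)
  fix i :: 'm
  have "v = M i *v (matrix_inv (M i) *v v)"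
    by (rule matrix_vector_mult_matrix_inv[OF positive_definite_invertible[OF lower \<open>0 < \<mu>\<close>], symmetric])
  then show "v = 0"
    by (simp add: inv_zero)
qed

lemma norm_vector_average_inverse_le:
  fixes M :: "'m::finite \<Rightarrow> real^'n^'n"
  assumes lower: "\<And>i z. \<mu> * (z \<bullet> z) \<le> z \<bullet> (M i *v z)" and "0 < \<mu>"
  shows "norm (w v* ((1 / real CARD('m)) *\<^sub>R (\<Sum>i\<in>UNIV. matrix_inv (M i)))) \<le> norm w / \<mu>"
proof -
  have "norm (w v* ((1 / real CARD('m)) *\<^sub>R (\<Sum>i\<in>UNIV. matrix_inv (M i))))
      \<le> (\<Sum>i\<in>UNIV. norm (w v* matrix_inv (M i))) / real CARD('m)"
    using norm_average_le[of "\<lambda>i. w v* matrix_inv (M i)"]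
    by (simp add: vector_scaleR_matrix_ac vector_matrix_mult_sum)
  also have "\<dots> \<le> (\<Sum>i\<in>(UNIV::'m set). norm w / \<mu>) / real CARD('m)"
    by (intro divide_right_mono sum_mono norm_vector_matrix_inv_le[OF lower \<open>0 < \<mu>\<close>]) simp
  also have "\<dots> = norm w / \<mu>"
    by simp
  finally show ?thesis .
qed

section \<open>Taylor estimates under a Lipschitz Hessian\<close>

lemma lipschitz_constant_nonneg:
  fixes H :: "'a::euclidean_space \<Rightarrow> 'b::real_normed_vector"
  assumes "\<And>x y. norm (H x - H y) \<le> C * norm (x - y)"
  shows "0 \<le> C"
proof -
  obtain b :: 'a where b: "b \<in> Basis" using nonempty_Basis by blast
  have "0 \<le> norm (H b - H 0)" by simp
  also have "\<dots> \<le> C" using assms[of b 0] b by simp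
  finally show ?thesis .
qed

lemma lipschitz_jacobian_linear_approx:
  fixes G :: "real^'n \<Rightarrow> real^'n" and H :: "real^'n \<Rightarrow> real^'n^'n"
  assumes G: "\<And>x. (G has_derivative (\<lambda>h. H x *v h)) (at x)"
    and lip: "\<And>x y. norm (H x - H y) \<le> Lb * norm (x - y)"
  shows "norm (G (p + h) - G p - H q *v h) \<le> Lb * norm h * (norm h / 2 + norm (p - q))"
proof -
  have Lb: "0 \<le> Lb" by (rule lipschitz_constant_nonneg[OF lip])
  define F where "F r = G (p + r *\<^sub>R h) - r *\<^sub>R (H q *v h)" for r
  define \<phi> where "\<phi> r = Lb * norm h * (r^2 / 2 * norm h + r * norm (p - q))" for r
  have dF: "(F has_vector_derivative (H (p + r *\<^sub>R h) *v h - H q *v h)) (at r)" for r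
  proof -
    have "((\<lambda>r. p + r *\<^sub>R h) has_derivative (\<lambda>t. t *\<^sub>R h)) (at r)"
      by (auto intro!: derivative_eq_intros)
    from has_derivative_compose[OF this G]
    have "(F has_derivative (\<lambda>t. H (p + r *\<^sub>R h) *v (t *\<^sub>R h) - t *\<^sub>R (H q *v h))) (at r)"
      unfolding F_def by (auto intro!: derivative_eq_intros)
    then show ?thesis
      by (simp add: has_vector_derivative_def matrix_vector_mult_scaleR algebra_simps)
  qed
  have d\<phi>: "(\<phi> has_vector_derivative (Lb * norm h * (r * norm h + norm (p - q)))) (at r)" for r
    unfolding \<phi>_def has_vector_derivative_def
    by (auto intro!: derivative_eq_intros simp: algebra_simps)
  have bound: "norm (H (p + r *\<^sub>R h) *v h - H q *v h) \<le> Lb * norm h * (r * norm h + norm (p - q))"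
    if "0 < r" for r
  proof -
    have "norm (H (p + r *\<^sub>R h) *v h - H q *v h) \<le> norm (H (p + r *\<^sub>R h) - H q) * norm h"
      using norm_matrix_vector_mult_le by (metis matrix_vector_mult_diff_rdistrib)
    also have "\<dots> \<le> Lb * norm (p + r *\<^sub>R h - q) * norm h"
      by (rule mult_right_mono[OF lip]) simp
    also have "\<dots> \<le> Lb * (r * norm h + norm (p - q)) * norm h"
      using norm_triangle_ineq[of "r *\<^sub>R h" "p - q"] that
      by (intro mult_right_mono mult_left_mono Lb) (auto simp: algebra_simps)
    finally show ?thesis by (simp add: mult_ac)
  qed
  have "norm (F 1 - F 0) \<le> \<phi> 1 - \<phi> 0"
    by (rule differentiable_bound_general[OF zero_less_one _ _ dF d\<phi> bound])
       (auto intro!: continuous_at_imp_continuous_on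
         simp: has_vector_derivative_continuous[OF dF] has_vector_derivative_continuous[OF d\<phi>])
  then show ?thesis by (simp add: F_def \<phi>_def algebra_simps)
qed

lemma lipschitz_hessian_quadratic_approx:
  fixes f :: "real^'n \<Rightarrow> real" and G :: "real^'n \<Rightarrow> real^'n" and H :: "real^'n \<Rightarrow> real^'n^'n"
  assumes f: "\<And>x. (f has_derivative (\<lambda>h. G x \<bullet> h)) (at x)"
    and G: "\<And>x. (G has_derivative (\<lambda>h. H x *v h)) (at x)"
    and lip: "\<And>x y. norm (H x - H y) \<le> Lb * norm (x - y)"
  shows "\<bar>f (p + h) - f p - G p \<bullet> h - h \<bullet> (H p *v h) / 2\<bar> \<le> Lb / 6 * norm h ^ 3"
proof -
  define F where "F r = f (p + r *\<^sub>R h) - r * (G p \<bullet> h) - r^2 / 2 * (h \<bullet> (H p *v h))" for r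
  define \<phi> where "\<phi> r = Lb / 6 * r^3 * norm h ^ 3" for r
  have dF: "(F has_vector_derivative (G (p + r *\<^sub>R h) \<bullet> h - G p \<bullet> h - r * (h \<bullet> (H p *v h)))) (at r)"
    for r
  proof -
    have "((\<lambda>r. p + r *\<^sub>R h) has_derivative (\<lambda>t. t *\<^sub>R h)) (at r)"
      by (auto intro!: derivative_eq_intros)
    from has_derivative_compose[OF this f]
    have "(F has_derivative
        (\<lambda>t. G (p + r *\<^sub>R h) \<bullet> (t *\<^sub>R h) - t * (G p \<bullet> h) - t * (r * (h \<bullet> (H p *v h))))) (at r)"
      unfolding F_def by (auto intro!: derivative_eq_intros simp: algebra_simps)
    then show ?thesis
      by (simp add: has_vector_derivative_def algebra_simps)
  qed
  have d\<phi>: "(\<phi> has_vector_derivative (Lb / 2 * r^2 * norm h ^ 3)) (at r)" for r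
    unfolding \<phi>_def has_vector_derivative_def
    by (auto intro!: derivative_eq_intros simp: algebra_simps power2_eq_square)
  have bound: "norm (G (p + r *\<^sub>R h) \<bullet> h - G p \<bullet> h - r * (h \<bullet> (H p *v h))) \<le> Lb / 2 * r^2 * norm h ^ 3"
    if "0 < r" for r
  proof -
    have "G (p + r *\<^sub>R h) \<bullet> h - G p \<bullet> h - r * (h \<bullet> (H p *v h))
        = (G (p + r *\<^sub>R h) - G p - H p *v (r *\<^sub>R h)) \<bullet> h"
      by (simp add: algebra_simps inner_commute matrix_vector_mult_scaleR)
    then have "norm (G (p + r *\<^sub>R h) \<bullet> h - G p \<bullet> h - r * (h \<bullet> (H p *v h)))
        \<le> norm (G (p + r *\<^sub>R h) - G p - H p *v (r *\<^sub>R h)) * norm h"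
      by (simp add: Cauchy_Schwarz_ineq2)
    also have "\<dots> \<le> Lb * norm (r *\<^sub>R h) * (norm (r *\<^sub>R h) / 2 + norm (p - p)) * norm h"
      by (rule mult_right_mono[OF lipschitz_jacobian_linear_approx[OF G lip]]) simp
    also have "\<dots> = Lb / 2 * r^2 * norm h ^ 3"
      using that by (simp add: power2_eq_square power3_eq_cube)
    finally show ?thesis .
  qed
  have "norm (F 1 - F 0) \<le> \<phi> 1 - \<phi> 0"
    by (rule differentiable_bound_general[OF zero_less_one _ _ dF d\<phi> bound])
       (auto intro!: continuous_at_imp_continuous_on
         simp: has_vector_derivative_continuous[OF dF] has_vector_derivative_continuous[OF d\<phi>])
  then show ?thesis by (simp add: F_def \<phi>_def algebra_simps)
qed

lemma cubic_mixed_terms_le: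
  fixes a b :: real
  assumes "0 \<le> a" "0 \<le> b"
  shows "b ^ 3 / 3 + a ^ 2 * b / 2 + a * b ^ 2 / 2 \<le> (a + b) ^ 3"
proof -
  have "(a + b) ^ 3 = a ^ 3 + 3 * (a ^ 2 * b) + 3 * (a * b ^ 2) + b ^ 3"
    by (simp add: power3_eq_cube power2_eq_square algebra_simps)
  moreover have "0 \<le> a ^ 3" "0 \<le> a ^ 2 * b" "0 \<le> a * b ^ 2" "0 \<le> b ^ 3"
    using assms by simp_all
  ultimately show ?thesis
    by linarith
qed

lemma lipschitz_hessian_second_difference:
  fixes f :: "real^'n \<Rightarrow> real" and G :: "real^'n \<Rightarrow> real^'n" and H :: "real^'n \<Rightarrow> real^'n^'n"
  assumes f: "\<And>x. (f has_derivative (\<lambda>h. G x \<bullet> h)) (at x)"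
    and G: "\<And>x. (G has_derivative (\<lambda>h. H x *v h)) (at x)"
    and lip: "\<And>x y. norm (H x - H y) \<le> Lb * norm (x - y)"
  shows "\<bar>f (x + h + k) - f (x + h) - f (x + k) + f x - k \<bullet> (H x *v h)\<bar>
           \<le> Lb * (norm h + norm k) ^ 3"
proof -
  have Lb: "0 \<le> Lb" by (rule lipschitz_constant_nonneg[OF lip])
  define e1 where "e1 = f (x + h + k) - f (x + h) - G (x + h) \<bullet> k - k \<bullet> (H (x + h) *v k) / 2"
  define e2 where "e2 = f (x + k) - f x - G x \<bullet> k - k \<bullet> (H x *v k) / 2"
  define e3 where "e3 = (G (x + h) - G x - H x *v h) \<bullet> k"
  define e4 where "e4 = k \<bullet> ((H (x + h) - H x) *v k) / 2"
  have "f (x + h + k) - f (x + h) - f (x + k) + f x - k \<bullet> (H x *v h) = e1 - e2 + e3 + e4"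
    unfolding e1_def e2_def e3_def e4_def
    by (simp add: inner_diff_left inner_diff_right matrix_vector_mult_diff_rdistrib
        diff_divide_distrib inner_commute)
  moreover have "\<bar>e1\<bar> \<le> Lb / 6 * norm k ^ 3" "\<bar>e2\<bar> \<le> Lb / 6 * norm k ^ 3"
    unfolding e1_def e2_def using lipschitz_hessian_quadratic_approx[OF f G lip] by blast+
  moreover have "\<bar>e3\<bar> \<le> Lb * norm h * (norm h / 2) * norm k"
  proof -
    have "\<bar>e3\<bar> \<le> norm (G (x + h) - G x - H x *v h) * norm k"
      unfolding e3_def by (rule Cauchy_Schwarz_ineq2)
    also have "\<dots> \<le> Lb * norm h * (norm h / 2 + norm (x - x)) * norm k"
      by (rule mult_right_mono[OF lipschitz_jacobian_linear_approx[OF G lip]]) simp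
    finally show ?thesis by simp
  qed
  moreover have "\<bar>e4\<bar> \<le> Lb * norm h * norm k ^ 2 / 2"
  proof -
    have "\<bar>k \<bullet> ((H (x + h) - H x) *v k)\<bar> \<le> norm k * norm ((H (x + h) - H x) *v k)"
      by (rule Cauchy_Schwarz_ineq2)
    also have "\<dots> \<le> norm k * (norm (H (x + h) - H x) * norm k)"
      by (intro mult_left_mono norm_matrix_vector_mult_le) simp
    also have "\<dots> \<le> norm k * (Lb * norm h * norm k)"
      using lip[of "x + h" x] by (intro mult_left_mono mult_right_mono) auto
    finally show ?thesis by (simp add: e4_def power2_eq_square mult_ac)
  qed
  moreover have "Lb / 6 * norm k ^ 3 + Lb / 6 * norm k ^ 3 + Lb * norm h * (norm h / 2) * norm k
      + Lb * norm h * norm k ^ 2 / 2 \<le> Lb * (norm h + norm k) ^ 3"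
    using mult_left_mono[OF cubic_mixed_terms_le[of "norm h" "norm k"] Lb]
    by (simp add: field_simps power2_eq_square)
  ultimately show ?thesis by linarith
qed

lemma eq_zero_if_abs_le_linear:
  fixes D C :: real
  assumes "\<And>t. 0 < t \<Longrightarrow> \<bar>D\<bar> \<le> t * C"
  shows "D = 0"
proof -
  have "\<bar>D\<bar> \<le> 0 + e" if "0 < e" for e
  proof -
    have "\<bar>D\<bar> \<le> e / (\<bar>C\<bar> + 1) * C"
      using assms[of "e / (\<bar>C\<bar> + 1)"] that by simp
    also have "\<dots> \<le> e / (\<bar>C\<bar> + 1) * (\<bar>C\<bar> + 1)"
      using that by (intro mult_left_mono) auto
    finally show ?thesis by simp
  qed
  then show ?thesis
    using field_le_epsilon[of "\<bar>D\<bar>" 0] by simp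
qed

lemma lipschitz_hessian_symmetric:
  fixes f :: "real^'n \<Rightarrow> real" and G :: "real^'n \<Rightarrow> real^'n" and H :: "real^'n \<Rightarrow> real^'n^'n"
  assumes f: "\<And>x. (f has_derivative (\<lambda>h. G x \<bullet> h)) (at x)"
    and G: "\<And>x. (G has_derivative (\<lambda>h. H x *v h)) (at x)"
    and lip: "\<And>x y. norm (H x - H y) \<le> Lb * norm (x - y)"
  shows "transpose (H x) = H x"
proof (rule symmetric_matrixI)
  fix u v
  \<comment> \<open>The second difference is symmetric in its two increments, so scaling both by t shows
    that the two bilinear forms differ by O(t).\<close>
  have "v \<bullet> (H x *v u) - u \<bullet> (H x *v v) = 0"
  proof (rule eq_zero_if_abs_le_linear[where C = "2 * Lb * (norm u + norm v) ^ 3"])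
    fix t :: real
    assume "0 < t"
    have "\<bar>t\<^sup>2 * (v \<bullet> (H x *v u) - u \<bullet> (H x *v v))\<bar>
        \<le> Lb * (norm (t *\<^sub>R u) + norm (t *\<^sub>R v)) ^ 3 + Lb * (norm (t *\<^sub>R v) + norm (t *\<^sub>R u)) ^ 3"
      using lipschitz_hessian_second_difference[OF f G lip, of x "t *\<^sub>R u" "t *\<^sub>R v"]
        lipschitz_hessian_second_difference[OF f G lip, of x "t *\<^sub>R v" "t *\<^sub>R u"]
      by (simp add: matrix_vector_mult_scaleR algebra_simps power2_eq_square abs_le_iff)
    also have "\<dots> = t\<^sup>2 * (t * (2 * Lb * (norm u + norm v) ^ 3))"
      using \<open>0 < t\<close> by (simp add: power2_eq_square power3_eq_cube algebra_simps)
    finally show "\<bar>v \<bullet> (H x *v u) - u \<bullet> (H x *v v)\<bar> \<le> t * (2 * Lb * (norm u + norm v) ^ 3)"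
      using \<open>0 < t\<close> by (simp add: abs_mult)
  qed
  then show "v \<bullet> (H x *v u) = u \<bullet> (H x *v v)"
    by simp
qed

lemma lipschitz_if_bounded_jacobian:
  fixes G :: "real^'n \<Rightarrow> real^'n" and H :: "real^'n \<Rightarrow> real^'n^'n"
  assumes G: "\<And>x. (G has_derivative (\<lambda>h. H x *v h)) (at x)"
    and bound: "\<And>x v. norm (H x *v v) \<le> L * norm v"
  shows "norm (G a - G b) \<le> L * norm (a - b)"
proof (rule differentiable_bound[where S = UNIV and f' = "\<lambda>x h. H x *v h"])
  show "(G has_derivative (\<lambda>h. H x *v h)) (at x within UNIV)" for x
    using G by simp
  show "onorm (\<lambda>h. H x *v h) \<le> L" for x
    by (rule onorm_le) (rule bound)
qed auto

lemma gradient_increment_approx: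
  fixes G :: "real^'n \<Rightarrow> real^'n" and H :: "real^'n \<Rightarrow> real^'n^'n"
  assumes G: "\<And>x. (G has_derivative (\<lambda>h. H x *v h)) (at x)"
    and lip: "\<And>x y. norm (H x - H y) \<le> Lb * norm (x - y)"
    and G_lip: "\<And>x y. norm (G x - G y) \<le> L * norm (x - y)"
  shows "norm (G x - G z - H x *v (c - z))
    \<le> L * norm (x - c) + Lb * norm (c - z) * (norm (c - z) / 2 + norm (x - c))"
proof -
  have "norm (G (c + (z - c)) - G c - H x *v (z - c))
      \<le> Lb * norm (z - c) * (norm (z - c) / 2 + norm (c - x))"
    by (rule lipschitz_jacobian_linear_approx[OF G lip])
  then have taylor: "norm (G c - G z - H x *v (c - z)) \<le> Lb * norm (c - z) * (norm (c - z) / 2 + norm (x - c))"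
    by (simp add: norm_minus_commute matrix_vector_mult_diff_distrib algebra_simps)
  have "norm (G x - G z - H x *v (c - z)) = norm ((G x - G c) + (G c - G z - H x *v (c - z)))"
    by (simp add: algebra_simps)
  also have "\<dots> \<le> norm (G x - G c) + norm (G c - G z - H x *v (c - z))"
    by (rule norm_triangle_ineq)
  also have "\<dots> \<le> L * norm (x - c) + Lb * norm (c - z) * (norm (c - z) / 2 + norm (x - c))"
    using G_lip taylor by (rule add_mono)
  finally show ?thesis .
qed

lemma gradient_zero_at_minimum:
  fixes F :: "'a::real_inner \<Rightarrow> real"
  assumes "(F has_derivative (\<lambda>h. g \<bullet> h)) (at x)" and "\<And>y. F x \<le> F y"
  shows "g = 0"
proof -
  have "(\<lambda>h. g \<bullet> h) = (\<lambda>h. 0)"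
    by (rule has_derivative_local_min[OF assms(1)]) (simp add: assms(2))
  then have "g \<bullet> g = 0"
    by meson
  then show ?thesis
    by simp
qed

section \<open>One averaged Network-GIANT step\<close>

lemma row_avg_matrix_mult_doubly_stochastic:
  fixes W :: "real^'m::finite^'m" and X :: "real^'n^'m"
  assumes "doubly_stochastic W"
  shows "row_avg (W ** X) = row_avg X"
proof -
  have col_sums: "(\<Sum>i\<in>UNIV. W $ i $ j) = 1" for j
    using assms by (simp add: doubly_stochastic_def)
  have "(\<Sum>i\<in>UNIV. (W ** X) $ i) $ c = (\<Sum>i\<in>UNIV. X $ i) $ c" for c
  proof -
    have "(\<Sum>i\<in>UNIV. (W ** X) $ i) $ c = (\<Sum>i\<in>UNIV. \<Sum>j\<in>UNIV. W $ i $ j * X $ j $ c)"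
      by (simp add: sum_component matrix_matrix_mult_def)
    also have "\<dots> = (\<Sum>j\<in>UNIV. (\<Sum>i\<in>UNIV. W $ i $ j) * X $ j $ c)"
      by (subst sum.swap) (simp add: sum_distrib_right)
    also have "\<dots> = (\<Sum>i\<in>UNIV. X $ i) $ c"
      by (simp add: col_sums sum_component)
    finally show ?thesis .
  qed
  then show ?thesis
    by (simp add: row_avg_def vec_eq_iff)
qed

lemma row_avg_diff_scaleR:
  fixes A B :: "real^'n^'m::finite"
  shows "row_avg (A - c *\<^sub>R B) = row_avg A - c *\<^sub>R row_avg B"
  by (simp add: row_avg_def sum_subtractf scaleR_sum_right[symmetric] algebra_simps)

lemma norm_average_rows_matrix_inv_le:
  fixes M :: "'m::finite \<Rightarrow> real^'n^'n" and R :: "real^'n^'m"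
  assumes lower: "\<And>i z. \<mu> * (z \<bullet> z) \<le> z \<bullet> (M i *v z)" and "0 < \<mu>"
  shows "norm ((1 / real CARD('m)) *\<^sub>R (\<Sum>i\<in>UNIV. R $ i v* matrix_inv (M i)))
    \<le> norm R / sqrt (real CARD('m)) / \<mu>"
proof -
  have "norm ((1 / real CARD('m)) *\<^sub>R (\<Sum>i\<in>UNIV. R $ i v* matrix_inv (M i)))
      \<le> (\<Sum>i\<in>UNIV. norm (R $ i v* matrix_inv (M i))) / real CARD('m)"
    by (rule norm_average_le)
  also have "\<dots> \<le> (\<Sum>i\<in>UNIV. norm (R $ i) / \<mu>) / real CARD('m)"
    by (intro divide_right_mono sum_mono norm_vector_matrix_inv_le[OF lower \<open>0 < \<mu>\<close>]) simp
  also have "\<dots> = (\<Sum>i\<in>UNIV. norm (R $ i)) / real CARD('m) / \<mu>"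
    by (simp add: sum_divide_distrib[symmetric])
  also have "\<dots> \<le> norm R / sqrt (real CARD('m)) / \<mu>"
    using \<open>0 < \<mu>\<close> by (intro divide_right_mono average_norm_rows_le) simp
  finally show ?thesis .
qed

lemma newton_direction_error:
  fixes M :: "'m::finite \<Rightarrow> real^'n^'n" and S :: "real^'n^'m" and g d :: "real^'n"
  assumes sym: "\<And>i. transpose (M i) = M i"
    and lower: "\<And>i z. \<mu> * (z \<bullet> z) \<le> z \<bullet> (M i *v z)" and "0 < \<mu>"
  defines "Htr \<equiv> (1 / real CARD('m)) *\<^sub>R (\<Sum>i\<in>UNIV. M i)"
    and "A \<equiv> (1 / real CARD('m)) *\<^sub>R (\<Sum>i\<in>UNIV. matrix_inv (M i))"
  shows "norm ((1 / real CARD('m)) *\<^sub>R (\<Sum>i\<in>UNIV. S $ i v* matrix_inv (M i)) - d)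
    \<le> (norm (S - ones_row g) / sqrt (real CARD('m)) + norm (g - Htr *v d)
        + norm d * norm (Htr - matrix_inv A)) / \<mu>"
proof -
  define e where "e = (1 / real CARD('m)) *\<^sub>R (\<Sum>i\<in>UNIV. (S - ones_row g) $ i v* matrix_inv (M i))"
  define r where "r = (g - Htr *v d) + d v* (Htr - matrix_inv A)"
  have "M i *v d = d v* M i" for i
    using transpose_matrix_vector[of "M i" d] sym by simp
  then have "Htr *v d = d v* Htr"
    by (simp add: Htr_def scaleR_matrix_vector_mult matrix_vector_mult_sum vector_scaleR_matrix_ac
        vector_matrix_mult_sum)
  moreover have "d = (d v* matrix_inv A) v* A"
    using matrix_mul_matrix_inv(2)[OF average_inverse_invertible[where M = M, OF lower \<open>0 < \<mu>\<close>]]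
    by (simp add: A_def vector_matrix_mul_assoc)
  ultimately have decomposition:
    "(1 / real CARD('m)) *\<^sub>R (\<Sum>i\<in>UNIV. S $ i v* matrix_inv (M i)) - d = e + r v* A"
    by (simp add: e_def r_def A_def ones_row_def vector_matrix_mult_diff_distrib
        vector_matrix_mult_diff_rdistrib sum_subtractf vector_scaleR_matrix_ac vector_matrix_mult_sum
        scaleR_diff_right)
  have "norm e \<le> norm (S - ones_row g) / sqrt (real CARD('m)) / \<mu>"
    unfolding e_def by (rule norm_average_rows_matrix_inv_le[OF lower \<open>0 < \<mu>\<close>])
  moreover have "norm (r v* A) \<le> (norm (g - Htr *v d) + norm d * norm (Htr - matrix_inv A)) / \<mu>"
  proof -
    have "norm (r v* A) \<le> norm r / \<mu>"
      unfolding A_def by (rule norm_vector_average_inverse_le[where M = M, OF lower \<open>0 < \<mu>\<close>])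
    also have "\<dots> \<le> (norm (g - Htr *v d) + norm d * norm (Htr - matrix_inv A)) / \<mu>"
      using norm_triangle_ineq[of "g - Htr *v d" "d v* (Htr - matrix_inv A)"]
        norm_vector_matrix_mult_le[of d "Htr - matrix_inv A"] \<open>0 < \<mu>\<close>
      by (intro divide_right_mono) (auto simp: r_def)
    finally show ?thesis .
  qed
  ultimately show ?thesis
    unfolding decomposition add_divide_distrib
    using norm_triangle_ineq[of e "r v* A"] by (simp add: add_divide_distrib)
qed

lemma averaged_gradient_error:
  fixes grad :: "'m::finite \<Rightarrow> real^'n \<Rightarrow> real^'n" and hess :: "'m \<Rightarrow> real^'n \<Rightarrow> real^'n^'n"
    and X :: "real^'n^'m"
  assumes hess: "\<And>i x. (grad i has_derivative (\<lambda>h. hess i x *v h)) (at x)"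
    and hess_lip: "\<And>i x y. norm (hess i x - hess i y) \<le> Lbar * norm (x - y)"
    and grad_lip: "\<And>i x y. norm (grad i x - grad i y) \<le> L * norm (x - y)"
    and stationary: "(\<Sum>i\<in>UNIV. grad i xstar) = 0"
  defines "d \<equiv> row_avg X - xstar"
    and "\<delta> \<equiv> norm (X - ones_row (row_avg X)) / sqrt (real CARD('m))"
  shows "norm (row_avg (\<chi> i. grad i (X $ i)) - ((1 / real CARD('m)) *\<^sub>R (\<Sum>i\<in>UNIV. hess i (X $ i))) *v d)
    \<le> L * \<delta> + Lbar * norm d * (norm d / 2 + \<delta>)"
proof -
  define xb where "xb = row_avg X"
  define spread where "spread = (\<Sum>i\<in>UNIV. norm (X $ i - xb)) / real CARD('m)"
  have row_error: "norm (grad i (X $ i) - grad i xstar - hess i (X $ i) *v d)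
      \<le> L * norm (X $ i - xb) + Lbar * norm d * (norm d / 2 + norm (X $ i - xb))" for i
    unfolding d_def xb_def by (rule gradient_increment_approx[OF hess hess_lip grad_lip])
  have "(1 / real CARD('m)) *\<^sub>R (\<Sum>i\<in>UNIV. grad i (X $ i) - grad i xstar - hess i (X $ i) *v d)
      = (1 / real CARD('m)) *\<^sub>R (\<Sum>i\<in>UNIV. grad i (X $ i))
        - (1 / real CARD('m)) *\<^sub>R (\<Sum>i\<in>UNIV. hess i (X $ i) *v d)"
    using stationary by (simp add: sum_subtractf scaleR_diff_right)
  then have "norm (row_avg (\<chi> i. grad i (X $ i)) - ((1 / real CARD('m)) *\<^sub>R (\<Sum>i\<in>UNIV. hess i (X $ i))) *v d)
      = norm ((1 / real CARD('m)) *\<^sub>R (\<Sum>i\<in>UNIV. grad i (X $ i) - grad i xstar - hess i (X $ i) *v d))"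
    by (simp add: row_avg_def scaleR_matrix_vector_mult matrix_vector_mult_sum)
  also have "\<dots> \<le> (\<Sum>i\<in>UNIV. norm (grad i (X $ i) - grad i xstar - hess i (X $ i) *v d)) / real CARD('m)"
    by (rule norm_average_le)
  also have "\<dots> \<le> (\<Sum>i\<in>UNIV. L * norm (X $ i - xb) + Lbar * norm d * (norm d / 2 + norm (X $ i - xb)))
          / real CARD('m)"
    by (intro divide_right_mono sum_mono row_error) simp
  also have "\<dots> = L * spread + Lbar * norm d * (norm d / 2 + spread)"
  proof -
    have "(\<Sum>i\<in>UNIV. L * norm (X $ i - xb) + Lbar * norm d * (norm d / 2 + norm (X $ i - xb)))
        = (L + Lbar * norm d) * (\<Sum>i\<in>UNIV. norm (X $ i - xb))
          + real CARD('m) * (Lbar * norm d * (norm d / 2))"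
      by (simp add: sum.distrib sum_distrib_left algebra_simps)
    then show ?thesis
      by (simp add: spread_def field_simps)
  qed
  also have "\<dots> \<le> L * \<delta> + Lbar * norm d * (norm d / 2 + \<delta>)"
  proof -
    have "spread \<le> \<delta>"
      using average_norm_rows_le[of "X - ones_row xb"]
      by (simp add: spread_def \<delta>_def xb_def ones_row_def)
    moreover have "0 \<le> L" "0 \<le> Lbar"
      using lipschitz_constant_nonneg grad_lip hess_lip by blast+
    ultimately show ?thesis
      by (intro add_mono mult_left_mono) auto
  qed
  finally show ?thesis .
qed

lemma giant_step_average_error:
  fixes grad :: "'m::finite \<Rightarrow> real^'n::finite \<Rightarrow> real^'n" and hess :: "'m \<Rightarrow> real^'n \<Rightarrow> real^'n^'n"
    and W :: "real^'m^'m" and X S :: "real^'n^'m"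
  assumes hess: "\<And>i x. (grad i has_derivative (\<lambda>h. hess i x *v h)) (at x)"
    and hess_lip: "\<And>i x y. norm (hess i x - hess i y) \<le> Lbar * norm (x - y)"
    and hess_sym: "\<And>i x. transpose (hess i x) = hess i x"
    and hess_lower: "\<And>i x z. \<mu> * (z \<bullet> z) \<le> z \<bullet> (hess i x *v z)" and "0 < \<mu>"
    and grad_lip: "\<And>i x y. norm (grad i x - grad i y) \<le> L * norm (x - y)"
    and stationary: "(\<Sum>i\<in>UNIV. grad i xstar) = 0"
    and gamma: "norm ((1 / real CARD('m)) *\<^sub>R (\<Sum>i\<in>UNIV. hess i (X $ i))
             - matrix_inv ((1 / real CARD('m)) *\<^sub>R (\<Sum>i\<in>UNIV. matrix_inv (hess i (X $ i))))) \<le> \<gamma>"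
    and W: "doubly_stochastic W"
    and "0 \<le> \<eta>" "\<eta> \<le> 1"
  shows "norm (row_avg (W ** X - \<eta> *\<^sub>R (\<chi> i. S $ i v* matrix_inv (hess i (X $ i)))) - xstar)
     \<le> (1 - \<eta> * (1 - \<gamma> / \<mu>)) * norm (row_avg X - xstar)
       + \<eta> * Lbar / (\<mu> * sqrt (real CARD('m))) * norm (X - ones_row (row_avg X))
           * norm (row_avg X - xstar)
       + \<eta> * Lbar / (2 * \<mu>) * (norm (row_avg X - xstar))\<^sup>2
       + \<eta> / (\<mu> * sqrt (real CARD('m)))
           * norm (S - ones_row (row_avg (\<chi> i. grad i (X $ i))))
       + \<eta> * L / (\<mu> * sqrt (real CARD('m))) * norm (X - ones_row (row_avg X))"
proof -
  define M where "M i = hess i (X $ i)" for i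
  define Htr where "Htr = (1 / real CARD('m)) *\<^sub>R (\<Sum>i\<in>UNIV. M i)"
  define Happ where "Happ = matrix_inv ((1 / real CARD('m)) *\<^sub>R (\<Sum>i\<in>UNIV. matrix_inv (M i)))"
  define y where "y = (1 / real CARD('m)) *\<^sub>R (\<Sum>i\<in>UNIV. S $ i v* matrix_inv (M i))"
  define g where "g = row_avg (\<chi> i. grad i (X $ i))"
  define d where "d = row_avg X - xstar"
  define \<delta> where "\<delta> = norm (X - ones_row (row_avg X)) / sqrt (real CARD('m))"
  define \<sigma> where "\<sigma> = norm (S - ones_row g) / sqrt (real CARD('m))"
  have "row_avg (W ** X - \<eta> *\<^sub>R (\<chi> i. S $ i v* matrix_inv (hess i (X $ i)))) = row_avg X - \<eta> *\<^sub>R y"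
    by (simp add: row_avg_diff_scaleR row_avg_matrix_mult_doubly_stochastic[OF W])
      (simp add: row_avg_def y_def M_def)
  then have "row_avg (W ** X - \<eta> *\<^sub>R (\<chi> i. S $ i v* matrix_inv (hess i (X $ i)))) - xstar
      = (1 - \<eta>) *\<^sub>R d - \<eta> *\<^sub>R (y - d)"
    by (simp add: d_def algebra_simps)
  then have step: "norm (row_avg (W ** X - \<eta> *\<^sub>R (\<chi> i. S $ i v* matrix_inv (hess i (X $ i)))) - xstar)
      \<le> (1 - \<eta>) * norm d + \<eta> * norm (y - d)"
    using norm_triangle_ineq4[of "(1 - \<eta>) *\<^sub>R d" "\<eta> *\<^sub>R (y - d)"] \<open>0 \<le> \<eta>\<close> \<open>\<eta> \<le> 1\<close> by simp
  have "norm (y - d) \<le> (\<sigma> + norm (g - Htr *v d) + norm d * norm (Htr - Happ)) / \<mu>"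
    unfolding y_def \<sigma>_def Htr_def Happ_def
    by (rule newton_direction_error) (simp_all add: M_def hess_sym hess_lower \<open>0 < \<mu>\<close>)
  moreover have "norm (g - Htr *v d) \<le> L * \<delta> + Lbar * norm d * (norm d / 2 + \<delta>)"
    unfolding g_def Htr_def M_def d_def \<delta>_def
    by (rule averaged_gradient_error[OF hess hess_lip grad_lip stationary])
  moreover have "norm (Htr - Happ) \<le> \<gamma>"
    using gamma by (simp add: Htr_def Happ_def M_def)
  ultimately have "norm (y - d) \<le> (\<sigma> + (L * \<delta> + Lbar * norm d * (norm d / 2 + \<delta>)) + norm d * \<gamma>) / \<mu>"
    using \<open>0 < \<mu>\<close> by (elim order_trans) (intro divide_right_mono add_mono mult_left_mono; simp)
  with step \<open>0 \<le> \<eta>\<close> have "norm (row_avg (W ** X - \<eta> *\<^sub>R (\<chi> i. S $ i v* matrix_inv (hess i (X $ i)))) - xstar)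
      \<le> (1 - \<eta>) * norm d + \<eta> * ((\<sigma> + (L * \<delta> + Lbar * norm d * (norm d / 2 + \<delta>)) + norm d * \<gamma>) / \<mu>)"
    by (meson add_left_mono mult_left_mono order_trans)
  also have "\<dots> = (1 - \<eta> * (1 - \<gamma> / \<mu>)) * norm (row_avg X - xstar)
       + \<eta> * Lbar / (\<mu> * sqrt (real CARD('m))) * norm (X - ones_row (row_avg X))
           * norm (row_avg X - xstar)
       + \<eta> * Lbar / (2 * \<mu>) * (norm (row_avg X - xstar))\<^sup>2
       + \<eta> / (\<mu> * sqrt (real CARD('m)))
           * norm (S - ones_row (row_avg (\<chi> i. grad i (X $ i))))
       + \<eta> * L / (\<mu> * sqrt (real CARD('m))) * norm (X - ones_row (row_avg X))"
    using \<open>0 < \<mu>\<close> by (simp add: \<delta>_def \<sigma>_def g_def d_def field_simps power2_eq_square)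
  finally show ?thesis .
qed

theorem theorem3:
  fixes f :: "'m::finite \<Rightarrow> real^'n::finite \<Rightarrow> real"
    and grad :: "'m \<Rightarrow> real^'n \<Rightarrow> real^'n"
    and hess :: "'m \<Rightarrow> real^'n \<Rightarrow> real^'n^'n"
    and \<mu> L Lbar \<gamma> \<eta> :: real
    and xstar :: "real^'n"
    and W :: "real^'m^'m"
    and E :: "'m \<Rightarrow> 'm \<Rightarrow> bool"
    and xs ss :: "nat \<Rightarrow> real^'n^'m"
    and k :: nat
  assumes N2: "CARD('m) \<ge> 2"
    and grad: "\<And>i x. (f i has_derivative (\<lambda>h. grad i x \<bullet> h)) (at x)"
    and hess: "\<And>i x. (grad i has_derivative (\<lambda>h. hess i x *v h)) (at x)"
    and hess_cont: "\<And>i. continuous_on UNIV (hess i)"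
    and mu_pos: "0 < \<mu>" and mu_L: "\<mu> \<le> L"
    and hess_lb: "\<And>i x. loewner_le (\<mu> *\<^sub>R mat 1) (hess i x)"
    and hess_ub: "\<And>i x. loewner_le (hess i x) (L *\<^sub>R mat 1)"
    and hess_lip: "\<And>i x y. norm (hess i x - hess i y) \<le> Lbar * norm (x - y)"
    and xstar_min: "\<forall>x. (\<Sum>i\<in>UNIV. f i xstar) / real CARD('m) \<le> (\<Sum>i\<in>UNIV. f i x) / real CARD('m)"
    and xstar_unique: "\<forall>y. (\<forall>x. (\<Sum>i\<in>UNIV. f i y) / real CARD('m) \<le> (\<Sum>i\<in>UNIV. f i x) / real CARD('m)) \<longrightarrow> y = xstar"
    and gamma: "\<And>X :: real^'n^'m.
       norm ((1 / real CARD('m)) *\<^sub>R (\<Sum>i\<in>UNIV. hess i (X $ i))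
             - matrix_inv ((1 / real CARD('m)) *\<^sub>R (\<Sum>i\<in>UNIV. matrix_inv (hess i (X $ i))))) \<le> \<gamma>"
    and W_sym: "transpose W = W"
    and W_ds: "doubly_stochastic W"
    and W_graph: "consensus_matrix_of E W"
    and sigma: "spec_norm (W - avg_mat) < 1"
    and x_step: "\<And>j. xs (Suc j) = W ** xs j
                   - \<eta> *\<^sub>R (\<chi> i. (ss j $ i) v* matrix_inv (hess i (xs j $ i)))"
    and s_step: "\<And>j. ss (Suc j) = W ** ss j + (\<chi> i. grad i (xs (Suc j) $ i))
                   - (\<chi> i. grad i (xs j $ i))"
    and s_init: "ss 0 = (\<chi> i. grad i (xs 0 $ i))"
    and gamma_mu: "\<gamma> < \<mu>"
    and eta: "0 < \<eta>" "\<eta> < 1"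
  shows "norm (row_avg (xs (Suc k)) - xstar)
     \<le> (1 - \<eta> * (1 - \<gamma> / \<mu>)) * norm (row_avg (xs k) - xstar)
       + \<eta> * Lbar / (\<mu> * sqrt (real CARD('m))) * norm (xs k - ones_row (row_avg (xs k)))
           * norm (row_avg (xs k) - xstar)
       + \<eta> * Lbar / (2 * \<mu>) * (norm (row_avg (xs k) - xstar))\<^sup>2
       + \<eta> / (\<mu> * sqrt (real CARD('m)))
           * norm (ss k - ones_row (row_avg (\<chi> i. grad i (xs k $ i))))
       + \<eta> * L / (\<mu> * sqrt (real CARD('m))) * norm (xs k - ones_row (row_avg (xs k)))"
proof -
  have hess_sym: "\<And>i x. transpose (hess i x) = hess i x"
    using grad hess hess_lip by (rule lipschitz_hessian_symmetric)
  have hess_lower: "\<And>i x z. \<mu> * (z \<bullet> z) \<le> z \<bullet> (hess i x *v z)"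
    using hess_lb by (rule quadratic_form_lower_bound)
  have "\<And>i x v. norm (hess i x *v v) \<le> L * norm v"
  proof (rule psd_matrix_norm_le[OF hess_sym])
    show "0 \<le> z \<bullet> (hess i x *v z)" for i x z
      by (rule order_trans[OF _ hess_lower]) (use mu_pos in simp)
    show "z \<bullet> (hess i x *v z) \<le> L * (z \<bullet> z)" for i x z
      using hess_ub by (rule quadratic_form_upper_bound)
  qed
  then have grad_lip: "\<And>i x y. norm (grad i x - grad i y) \<le> L * norm (x - y)"
    using hess by (intro lipschitz_if_bounded_jacobian)
  have stationary: "(\<Sum>i\<in>UNIV. grad i xstar) = 0"
  proof (rule gradient_zero_at_minimum)
    show "((\<lambda>x. \<Sum>i\<in>UNIV. f i x) has_derivative (\<lambda>h. (\<Sum>i\<in>UNIV. grad i xstar) \<bullet> h)) (at xstar)"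
      using has_derivative_sum[where f = f, OF grad] by (simp add: inner_sum_left)
    show "(\<Sum>i\<in>UNIV. f i xstar) \<le> (\<Sum>i\<in>UNIV. f i y)" for y
      using xstar_min by (simp add: divide_le_cancel)
  qed
  show ?thesis
    unfolding x_step
    using giant_step_average_error[OF hess hess_lip hess_sym hess_lower mu_pos grad_lip stationary gamma W_ds] eta
    by simp
qed

end
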